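(* Let $A,B$ be hypermatrices of order $n$ with $\Xi(A),\Xi(B)\in\mathcal C_n$. Then $A\preceq_B B$ if and only if $\Delta(A)_{i,j,k}\le\Delta(B)_{i,j,k}$ for all $i,k\in[n]$ and $j\in[ik]$.
   Context: Let $[n]=\{1,\dots,n\}$, $[0,n]=\{0,\dots,n\}$. A hypermatrix of order $n$ is an integer array $A=(A_{i,j,k})_{i,j,k\in[n]}$; $\Xi(A)_{i,j,k}=\sum_{a\le i,b\le j,c\le k}A_{a,b,c}$ for $i,j,k\in[0,n]$. A corner-sum hypermatrix of order $n$ is an integer array $C$ indexed by $[0,n]^3$ such that for all $i,j\in[0,n]$: $C_{i,j,0}=C_{i,0,j}=C_{0,i,j}=0$, $C_{i,j,n}=C_{i,n,j}=C_{n,i,j}=ij$, and for all $k\in[n]$ each of $C_{i,j,k}-C_{i,j,k-1}$, $C_{i,k,j}-C_{i,k-1,j}$, $C_{k,i,j}-C_{k-1,i,j}$ is an integer in $\{\max(0,i+j-n),\dots,\min(i,j)\}$; $\mathcal C_n$ is the set of these. The Bruhat order on such hypermatrices: $A\preceq_B B$ iff $\Xi(A)\ge\Xi(B)$ entrywise (equivalently, $A-B$ is a sum of positive T-blocks). The partial-sum hypermatrix is $P(A)_{i,j,k}=\sum_{a=1}^i\sum_{b=1}^k A_{a,j,b}$ (non-negative whenever $\Xi(A)\in\mathcal C_n$). $\Delta(A)$ is the family of sequences $\Delta(A)_{i,*,k}$, $i,k\in[n]$, in which each $j\in[n]$ occurs exactly $P(A)_{i,j,k}$ times, listed in weakly increasing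 order; this sequence has length $ik$, and $\Delta(A)_{i,j,k}$ denotes its $j$-th entry. *)

theory Defs
  imports Main
begin

text \<open>A hypermatrix of order n is represented as a function nat => nat => nat => int;
  only the entries with indices in {1..n} are relevant.\<close>
type_synonym hmat = "nat \<Rightarrow> nat \<Rightarrow> nat \<Rightarrow> int"

definition Xi :: "hmat \<Rightarrow> hmat" where
  "Xi A i j k = (\<Sum>a\<in>{1..i}. \<Sum>b\<in>{1..j}. \<Sum>c\<in>{1..k}. A a b c)"

definition corner_sum :: "nat \<Rightarrow> hmat \<Rightarrow> bool" where
  "corner_sum n C \<longleftrightarrow>
     (\<forall>i\<in>{0..n}. \<forall>j\<in>{0..n}.
        C i j 0 = 0 \<and> C i 0 j = 0 \<and> C 0 i j = 0 \<and>
        C i j n = int i * int j \<and> C i n j = int i * int j \<and> C n i j = int i * int j \<and>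
        (\<forall>k\<in>{1..n}.
           (let lo = max 0 (int i + int j - int n); hi = min (int i) (int j) in
              C i j k - C i j (k - 1) \<in> {lo..hi} \<and>
              C i k j - C i (k - 1) j \<in> {lo..hi} \<and>
              C k i j - C (k - 1) i j \<in> {lo..hi})))"

definition bruhat_le :: "nat \<Rightarrow> hmat \<Rightarrow> hmat \<Rightarrow> bool" where
  "bruhat_le n A B \<longleftrightarrow>
     (\<forall>i\<in>{0..n}. \<forall>j\<in>{0..n}. \<forall>k\<in>{0..n}. Xi A i j k \<ge> Xi B i j k)"

definition psum :: "hmat \<Rightarrow> hmat" where
  "psum A i j k = (\<Sum>a\<in>{1..i}. \<Sum>b\<in>{1..k}. A a j b)"

text \<open>The weakly increasing sequence Delta(A)_{i,*,k}, in which each j in [n] occurs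
  P(A)_{i,j,k} times.\<close>
definition Delta_seq :: "nat \<Rightarrow> hmat \<Rightarrow> nat \<Rightarrow> nat \<Rightarrow> nat list" where
  "Delta_seq n A i k = concat (map (\<lambda>j. replicate (nat (psum A i j k)) j) [1..<n+1])"

definition Delta :: "nat \<Rightarrow> hmat \<Rightarrow> nat \<Rightarrow> nat \<Rightarrow> nat \<Rightarrow> nat" where
  "Delta n A i j k = Delta_seq n A i k ! (j - 1)"

end

theory Submission
  imports Defs
begin

text \<open>The corner sum \<open>Xi A i m k\<close> is the sum of \<open>psum A i j k\<close> over \<open>j \<le> m\<close>, i.e. the number of
  entries \<open>\<le> m\<close> of the sequence \<open>Delta_seq n A i k\<close>, whose length is \<open>Xi A i n k = i * k\<close>.
  Two weakly increasing sequences of equal length are entrywise comparable iff, for every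
  threshold \<open>m\<close>, the smaller one has at least as many entries \<open>\<le> m\<close>. Since the faces \<open>i = 0\<close>
  and \<open>k = 0\<close> of a corner-sum hypermatrix vanish, the Bruhat comparison of \<open>Xi A\<close> and
  \<open>Xi B\<close> is exactly this comparison of counts, for all \<open>i, k\<close>.\<close>

lemma sorted_nth_le_iff_count_le:
  fixes xs ys :: "'a::linorder list"
  assumes sorted_xs: "sorted xs" and sorted_ys: "sorted ys" and len: "length xs = length ys"
  shows "(\<forall>p<length xs. xs ! p \<le> ys ! p) \<longleftrightarrow>
    (\<forall>m. length (filter (\<lambda>x. x \<le> m) ys) \<le> length (filter (\<lambda>x. x \<le> m) xs))"
proof
  assume le: "\<forall>p<length xs. xs ! p \<le> ys ! p"
  show "\<forall>m. length (filter (\<lambda>x. x \<le> m) ys) \<le> length (filter (\<lambda>x. x \<le> m) xs)"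
  proof
    fix m
    have "{p. p < length ys \<and> ys ! p \<le> m} \<subseteq> {p. p < length xs \<and> xs ! p \<le> m}"
      using le len by (auto intro: order_trans)
    then show "length (filter (\<lambda>x. x \<le> m) ys) \<le> length (filter (\<lambda>x. x \<le> m) xs)"
      unfolding length_filter_conv_card by (rule card_mono[rotated]) simp
  qed
next
  assume count: "\<forall>m. length (filter (\<lambda>x. x \<le> m) ys) \<le> length (filter (\<lambda>x. x \<le> m) xs)"
  show "\<forall>p<length xs. xs ! p \<le> ys ! p"
  proof (rule ccontr)
    assume "\<not> (\<forall>p<length xs. xs ! p \<le> ys ! p)"
    then obtain p where p: "p < length xs" "ys ! p < xs ! p" by auto
    define m where "m = ys ! p"
    have "{..p} \<subseteq> {q. q < length ys \<and> ys ! q \<le> m}"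
      using p len sorted_ys by (auto simp: m_def intro: sorted_nth_mono)
    then have "Suc p \<le> length (filter (\<lambda>x. x \<le> m) ys)"
      unfolding length_filter_conv_card using card_mono[of _ "{..p}"] by fastforce
    also have "\<dots> \<le> length (filter (\<lambda>x. x \<le> m) xs)"
      using count by blast
    also have "\<dots> \<le> p"
    proof -
      have "{q. q < length xs \<and> xs ! q \<le> m} \<subseteq> {..<p}"
        using p sorted_xs by (auto simp: m_def not_less dest: sorted_nth_mono)
      then show ?thesis
        unfolding length_filter_conv_card using card_mono[of "{..<p}"] by fastforce
    qed
    finally show False by simp
  qed
qed

definition seq_of_counts :: "(nat \<Rightarrow> nat) \<Rightarrow> nat \<Rightarrow> nat list" where
  "seq_of_counts c n = concat (map (\<lambda>j. replicate (c j) j) [1..<n+1])"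

lemma seq_of_counts_0 [simp]: "seq_of_counts c 0 = []"
  by (simp add: seq_of_counts_def)

lemma seq_of_counts_Suc [simp]:
  "seq_of_counts c (Suc n) = seq_of_counts c n @ replicate (c (Suc n)) (Suc n)"
  by (simp add: seq_of_counts_def)

lemma set_seq_of_counts: "set (seq_of_counts c n) \<subseteq> {1..n}"
  by (induction n) auto

lemma sorted_seq_of_counts: "sorted (seq_of_counts c n)"
proof (induction n)
  case (Suc n)
  then show ?case
    using set_seq_of_counts[of c n] by (auto simp: sorted_append)
qed simp

lemma length_seq_of_counts: "length (seq_of_counts c n) = (\<Sum>j\<in>{1..n}. c j)"
  by (induction n) auto

lemma count_le_seq_of_counts:
  "length (filter (\<lambda>x. x \<le> m) (seq_of_counts c n)) = (\<Sum>j\<in>{1..min m n}. c j)"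
proof (induction n)
  case (Suc n)
  then show ?case
    by (cases "Suc n \<le> m") (simp_all add: min_def)
qed simp

lemma Xi_eq_sum_psum: "Xi A i j k = (\<Sum>b\<in>{1..j}. psum A i b k)"
  unfolding Xi_def psum_def by (rule sum.swap)

lemma Xi_eq_0: "i = 0 \<or> k = 0 \<Longrightarrow> Xi A i j k = 0"
  unfolding Xi_def by auto

lemma Delta_seq_eq_seq_of_counts: "Delta_seq n A i k = seq_of_counts (\<lambda>j. nat (psum A i j k)) n"
  by (simp add: Delta_seq_def seq_of_counts_def)

context
  fixes n :: nat and A :: hmat
  assumes corner_sum: "corner_sum n (Xi A)"
begin

lemma psum_nonneg:
  assumes "i \<le> n" "k \<le> n" "j \<in> {1..n}"
  shows "0 \<le> psum A i j k"
proof -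
  have "psum A i j k = Xi A i j k - Xi A i (j - 1) k"
    using assms(3) by (cases j) (simp_all add: Xi_eq_sum_psum)
  also have "\<dots> \<ge> 0"
    using corner_sum assms unfolding corner_sum_def Let_def by fastforce
  finally show ?thesis .
qed

lemma sum_nat_psum:
  assumes "i \<le> n" "k \<le> n" "m \<le> n"
  shows "int (\<Sum>j\<in>{1..m}. nat (psum A i j k)) = Xi A i m k"
  using assms psum_nonneg by (simp add: Xi_eq_sum_psum)

lemma count_le_Delta_seq:
  assumes "i \<le> n" "k \<le> n"
  shows "int (length (filter (\<lambda>x. x \<le> m) (Delta_seq n A i k))) = Xi A i (min m n) k"
  using assms sum_nat_psum
  by (simp add: Delta_seq_eq_seq_of_counts count_le_seq_of_counts)

lemma length_Delta_seq:
  assumes "i \<le> n" "k \<le> n"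
  shows "length (Delta_seq n A i k) = i * k"
proof -
  have "int (length (Delta_seq n A i k)) = Xi A i n k"
    using assms sum_nat_psum by (simp add: Delta_seq_eq_seq_of_counts length_seq_of_counts)
  also have "\<dots> = int (i * k)"
    using corner_sum assms unfolding corner_sum_def by auto
  finally show ?thesis
    by (simp only: of_nat_eq_iff)
qed

end

lemma Delta_le_iff_Xi_ge:
  assumes A: "corner_sum n (Xi A)" and B: "corner_sum n (Xi B)" and "i \<le> n" "k \<le> n"
  shows "(\<forall>j\<in>{1..i*k}. Delta n A i j k \<le> Delta n B i j k) \<longleftrightarrow>
    (\<forall>m\<in>{0..n}. Xi B i m k \<le> Xi A i m k)"
proof -
  let ?a = "Delta_seq n A i k" and ?b = "Delta_seq n B i k"
  have len_a: "length ?a = i * k" and len_b: "length ?b = i * k"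
    using length_Delta_seq[OF A] length_Delta_seq[OF B] assms(3,4) by auto
  have "(\<forall>j\<in>{1..i*k}. Delta n A i j k \<le> Delta n B i j k) \<longleftrightarrow> (\<forall>p<length ?a. ?a ! p \<le> ?b ! p)"
    unfolding Delta_def len_a
  proof (intro iffI allI impI ballI)
    fix p assume le: "\<forall>j\<in>{1..i*k}. ?a ! (j - 1) \<le> ?b ! (j - 1)" and "p < i * k"
    then have "Suc p \<in> {1..i*k}" by simp
    then show "?a ! p \<le> ?b ! p"
      using le by fastforce
  qed auto
  also have "\<dots> \<longleftrightarrow> (\<forall>m. length (filter (\<lambda>x. x \<le> m) ?b) \<le> length (filter (\<lambda>x. x \<le> m) ?a))"
    using len_a len_b
    by (intro sorted_nth_le_iff_count_le) (simp_all add: Delta_seq_eq_seq_of_counts sorted_seq_of_counts)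
  also have "\<dots> \<longleftrightarrow> (\<forall>m. Xi B i (min m n) k \<le> Xi A i (min m n) k)"
    by (simp only: count_le_Delta_seq[OF A assms(3,4), symmetric]
        count_le_Delta_seq[OF B assms(3,4), symmetric] of_nat_le_iff)
  also have "\<dots> \<longleftrightarrow> (\<forall>m\<in>{0..n}. Xi B i m k \<le> Xi A i m k)"
    by (metis atLeastAtMost_iff min.absorb1 min.cobounded2 zero_le)
  finally show ?thesis .
qed

lemma bruhat_le_iff_inner_faces:
  "bruhat_le n A B \<longleftrightarrow> (\<forall>i\<in>{1..n}. \<forall>k\<in>{1..n}. \<forall>m\<in>{0..n}. Xi B i m k \<le> Xi A i m k)"
  unfolding bruhat_le_def
proof (intro iffI ballI)
  fix i j k
  assume "\<forall>i\<in>{1..n}. \<forall>k\<in>{1..n}. \<forall>m\<in>{0..n}. Xi B i m k \<le> Xi A i m k"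
    and "i \<in> {0..n}" "j \<in> {0..n}" "k \<in> {0..n}"
  then show "Xi B i j k \<le> Xi A i j k"
    by (cases "i = 0 \<or> k = 0") (auto simp: Xi_eq_0)
qed auto

theorem mainTheorem20:
  fixes n :: nat and A B :: hmat
  assumes "corner_sum n (Xi A)" and "corner_sum n (Xi B)"
  shows "bruhat_le n A B \<longleftrightarrow>
    (\<forall>i\<in>{1..n}. \<forall>k\<in>{1..n}. \<forall>j\<in>{1..i*k}. Delta n A i j k \<le> Delta n B i j k)"
  unfolding bruhat_le_iff_inner_faces
  using Delta_le_iff_Xi_ge[OF assms] by simp

end
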